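(* The a priori Recursive Measure satisfies the strong minimum-power blocker postulate. For every SVG $\mathcal{G}=(N,\mathcal{W})$: (1) if $S\in\mathcal{W}$ and $b\in S$ is a YES-blocker, then $RM'_b\ge 1/|S|$; (2) if $T\notin\mathcal{W}$ and $b\in N\setminus T$ is a NO-blocker, then $RM'_b\ge 1/|N\setminus T|$. (Here $1$ is the RM value of a dictator in a dictator-rule game.)
   Context: A simple voting game (SVG) is a pair $\mathcal{G}=(N,\mathcal{W})$ with $N$ a nonempty finite set of $n$ players and $\mathcal{W}\subseteq 2^N$ monotone, $\emptyset\notin\mathcal{W}$, $N\in\mathcal{W}$. Divisions are identified with their YES-sets $S\subseteq N$. Decisiveness and success: - Player $k$ is YES-decisive in $S$ if $k\in S\in\mathcal{W}$ and $S\setminus\{k\}\notin\mathcal{W}$. - Player $k$ is NO-decisive in $S$ if $k\notin S\notin\mathcal{W}$ and $S\cup\{k\}\in\mathcal{W}$. - Player $k$ is successful in $S$ if ($k\in S\in\mathcal{W}$) or ($k\notin S\notin\mathcal{W}$). Loyal children: if $S\in\mathcal{W}$, they are the sets $S\setminus\{m\}\in\mathcal{W}$ with $m\in S$. If $S\notin\mathcal{W}$, they are the sets $S\cup\{m\}\notin\mathcal{W}$ with $m\notin S$. Recursive efficacy score $\alpha_k(S)$: - $\alpha_k(S)=1$ if $k$ is decisive; - $\alpha_k(S)=0$ if $k$ is not successful; - otherwise, the average of $\alpha_k$ over the loyal children of $S$. The a priori Recursive Measure is $RM'_k=2^{-n}\sum_{S\subseteq N}\alpha_k(S)$. Blockers: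 $b$ is a YES-blocker if $b\in S$ for all $S\in\mathcal{W}$, and a NO-blocker if $b\notin S$ for all $S\notin\mathcal{W}$. *)

theory Defs
  imports Main "HOL-Library.Disjoint_Sets" Complex_Main
begin

definition svg :: "'a set \<Rightarrow> 'a set set \<Rightarrow> bool" where
  "svg N W \<longleftrightarrow> finite N \<and> N \<noteq> {} \<and> W \<subseteq> Pow N \<and>
     (\<forall>S T. S \<in> W \<and> S \<subseteq> T \<and> T \<subseteq> N \<longrightarrow> T \<in> W) \<and> {} \<notin> W \<and> N \<in> W"

definition yes_decisive :: "'a set set \<Rightarrow> 'a \<Rightarrow> 'a set \<Rightarrow> bool" where
  "yes_decisive W k S \<longleftrightarrow> k \<in> S \<and> S \<in> W \<and> S - {k} \<notin> W"

definition no_decisive :: "'a set set \<Rightarrow> 'a \<Rightarrow> 'a set \<Rightarrow> bool" where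
  "no_decisive W k S \<longleftrightarrow> k \<notin> S \<and> S \<notin> W \<and> insert k S \<in> W"

definition decisive :: "'a set set \<Rightarrow> 'a \<Rightarrow> 'a set \<Rightarrow> bool" where
  "decisive W k S \<longleftrightarrow> yes_decisive W k S \<or> no_decisive W k S"

definition successful :: "'a set set \<Rightarrow> 'a \<Rightarrow> 'a set \<Rightarrow> bool" where
  "successful W k S \<longleftrightarrow> (k \<in> S \<and> S \<in> W) \<or> (k \<notin> S \<and> S \<notin> W)"

definition loyal_children :: "'a set \<Rightarrow> 'a set set \<Rightarrow> 'a set \<Rightarrow> 'a set set" where
  "loyal_children N W S =
     (if S \<in> W then {S - {m} | m. m \<in> S \<and> S - {m} \<in> W}
      else {insert m S | m. m \<in> N - S \<and> insert m S \<notin> W})"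

lemma loyal_children_measure:
  assumes "finite N" "S \<subseteq> N" "C \<in> loyal_children N W S"
  shows "C \<subseteq> N \<and> (if C \<in> W then card C else card (N - C))
           < (if S \<in> W then card S else card (N - S))"
proof (cases "S \<in> W")
  case True
  then obtain m where m: "m \<in> S" "C = S - {m}" "C \<in> W"
    using assms(3) by (auto simp: loyal_children_def)
  have "finite S" using assms(1,2) finite_subset by blast
  then have "card C < card S" using m by (metis card_Diff1_less)
  then show ?thesis using True m assms(2) by auto
next
  case False
  then obtain m where m: "m \<in> N - S" "C = insert m S" "C \<notin> W"
    using assms(3) by (auto simp: loyal_children_def)
  have "N - C = (N - S) - {m}" using m by auto
  then have "card (N - C) < card (N - S)"
    using m assms(1) by (metis card_Diff1_less finite_Diff)
  then show ?thesis using False m assms(2) by auto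
qed

function alpha :: "'a set \<Rightarrow> 'a set set \<Rightarrow> 'a \<Rightarrow> 'a set \<Rightarrow> real" where
  "alpha N W k S =
     (if \<not> finite N \<or> \<not> S \<subseteq> N then 0
      else if decisive W k S then 1
      else if \<not> successful W k S then 0
      else (\<Sum>C\<in>loyal_children N W S. alpha N W k C) / real (card (loyal_children N W S)))"
  by pat_completeness auto
termination
  by (relation "measure (\<lambda>(N, W, k, S). if S \<in> W then card S else card (N - S))")
     (auto dest: loyal_children_measure)

definition RM :: "'a set \<Rightarrow> 'a set set \<Rightarrow> 'a \<Rightarrow> real" where
  "RM N W k = (\<Sum>S\<in>Pow N. alpha N W k S) / 2 ^ card N"

definition yes_blocker :: "'a set set \<Rightarrow> 'a \<Rightarrow> bool" where
  "yes_blocker W b \<longleftrightarrow> (\<forall>S\<in>W. b \<in> S)"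

definition no_blocker :: "'a set \<Rightarrow> 'a set set \<Rightarrow> 'a \<Rightarrow> bool" where
  "no_blocker N W b \<longleftrightarrow> (\<forall>S. S \<subseteq> N \<and> S \<notin> W \<longrightarrow> b \<notin> S)"

end

theory Submission
  imports Defs
begin

text \<open>
  Let b be a YES-blocker and b \<in> S \<in> W.  Then b scores 1 in every winning coalition and 0 in
  every losing coalition containing b.  A coalition T without b is losing and so are all its
  children T + m (m \<noteq> b); so unless T + b wins (and b is decisive), alpha_b(T) is the average
  over all T + m, m \<notin> T.  By induction on |N - T|, alpha_b(T) \<ge> 1/|S - T|: the child T + b
  scores 0, the |S - T| - 1 children T + m with m \<in> S score at least 1/(|S - T| - 1), and the
  others at least 1/|S - T|.
  Pairing T with T + b, the sum of all scores is bounded below via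
  sum_{V \<subseteq> A} 1/(1 + |V|) = (2^(a+1) - 1)/(a + 1) for |A| = a, which gives RM'_b \<ge> 1/|S|.
  The NO-blocker half follows by passing to the dual game {X. N - X \<notin> W}: it exchanges the
  two kinds of blockers, and complementation of coalitions preserves every score.
\<close>

lemma sum_Pow_insert:
  fixes g :: "'a set \<Rightarrow> 'b::comm_monoid_add"
  assumes "finite M" "b \<notin> M"
  shows "(\<Sum>X\<in>Pow (insert b M). g X) = (\<Sum>T\<in>Pow M. g T + g (insert b T))"
proof -
  have inj: "inj_on (insert b) (Pow M)"
    using assms(2) unfolding inj_on_def by (metis Diff_insert_absorb PowD subsetD)
  have "(\<Sum>X\<in>Pow (insert b M). g X) = (\<Sum>X\<in>Pow M. g X) + (\<Sum>X\<in>insert b ` Pow M. g X)"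
    unfolding Pow_insert using assms by (intro sum.union_disjoint) auto
  also have "(\<Sum>X\<in>insert b ` Pow M. g X) = (\<Sum>T\<in>Pow M. g (insert b T))"
    using inj by (simp add: sum.reindex)
  finally show ?thesis by (simp add: sum.distrib)
qed

lemma sum_Pow_Un_Int:
  fixes f :: "'a set \<Rightarrow> 'b::comm_semiring_1"
  assumes "finite B" "finite A" "A \<inter> B = {}"
  shows "(\<Sum>T\<in>Pow (A \<union> B). f (T \<inter> A)) = 2 ^ card B * (\<Sum>U\<in>Pow A. f U)"
  using assms
proof (induction B rule: finite_induct)
  case empty
  have "(\<Sum>T\<in>Pow A. f (T \<inter> A)) = (\<Sum>U\<in>Pow A. f U)"
    by (rule sum.cong) (auto simp: Int_absorb2)
  then show ?case by simp
next
  case (insert x B)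
  have x: "x \<notin> A \<union> B" using insert by auto
  have "(\<Sum>T\<in>Pow (A \<union> insert x B). f (T \<inter> A)) = (\<Sum>T\<in>Pow (A \<union> B). 2 * f (T \<inter> A))"
    using sum_Pow_insert[OF _ x, of "\<lambda>T. f (T \<inter> A)"] x insert.hyps insert.prems by (simp add: mult_2)
  then show ?case using insert by (simp add: sum_distrib_left[symmetric] mult.assoc)
qed

lemma sum_Pow_inverse_Suc_card:
  assumes "finite A"
  shows "(\<Sum>V\<in>Pow A. 1 / (1 + real (card V))) = (2 ^ (card A + 1) - 1) / (real (card A) + 1)"
proof -
  let ?a = "card A"
  have "card ` Pow A \<subseteq> {..?a}" using assms by (auto intro: card_mono)
  then have "(\<Sum>V\<in>Pow A. 1 / (1 + real (card V))) =
        (\<Sum>k\<le>?a. \<Sum>V\<in>{V \<in> Pow A. card V = k}. 1 / (1 + real (card V)))"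
    using assms by (intro sum.group[symmetric]) auto
  also have "\<dots> = (\<Sum>k\<le>?a. real (?a choose k) / (1 + real k))"
  proof (rule sum.cong)
    fix k
    have "card {V \<in> Pow A. card V = k} = ?a choose k"
      using n_subsets[OF assms, of k] by (simp add: Pow_def conj_commute)
    then show "(\<Sum>V\<in>{V \<in> Pow A. card V = k}. 1 / (1 + real (card V))) = real (?a choose k) / (1 + real k)"
      by simp
  qed simp
  also have "\<dots> = (\<Sum>k\<le>?a. real (Suc ?a choose Suc k)) / (real ?a + 1)"
  proof -
    have "real (?a choose k) / (1 + real k) = real (Suc ?a choose Suc k) / (real ?a + 1)" for k
    proof -
      have "real (Suc ?a) * real (?a choose k) = real (Suc ?a choose Suc k) * real (Suc k)"
        by (metis Suc_times_binomial_eq of_nat_mult)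
      then show ?thesis by (simp add: field_simps)
    qed
    then show ?thesis by (simp add: sum_divide_distrib)
  qed
  also have "(\<Sum>k\<le>?a. real (Suc ?a choose Suc k)) = 2 ^ (?a + 1) - 1"
  proof -
    have "1 + (\<Sum>k\<le>?a. Suc ?a choose Suc k) = 2 ^ (?a + 1)"
      using choose_row_sum[of "Suc ?a"] sum.atMost_Suc_shift[of "\<lambda>k. Suc ?a choose k" ?a] by simp
    then have "1 + (\<Sum>k\<le>?a. real (Suc ?a choose Suc k)) = 2 ^ (?a + 1)"
      by (metis of_nat_1 of_nat_add of_nat_numeral of_nat_power of_nat_sum)
    then show ?thesis by simp
  qed
  finally show ?thesis .
qed

lemma sum_Pow_inverse_Suc_card_Diff_ge:
  assumes "finite M" "A \<subseteq> M"
  shows "2 ^ (card M + 1) / (real (card A) + 1)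
         \<le> (\<Sum>T\<in>Pow M. 1 / (1 + real (card (A - T))) + (if A \<subseteq> T then 1 else 0))"
proof -
  define f where "f U = 1 / (1 + real (card (A - U))) + (if U = A then 1 else 0)" for U
  have finA: "finite A" using assms finite_subset by blast
  have "f (T \<inter> A) = 1 / (1 + real (card (A - T))) + (if A \<subseteq> T then 1 else 0)" for T
  proof -
    have "A - T \<inter> A = A - T" "(T \<inter> A = A) = (A \<subseteq> T)" by auto
    then show ?thesis unfolding f_def by simp
  qed
  then have "(\<Sum>T\<in>Pow M. 1 / (1 + real (card (A - T))) + (if A \<subseteq> T then 1 else 0))
        = (\<Sum>T\<in>Pow M. f (T \<inter> A))" by simp
  also have "\<dots> = 2 ^ card (M - A) * (\<Sum>U\<in>Pow A. f U)"
    using sum_Pow_Un_Int[of "M - A" A f] assms finA by (simp add: Un_absorb1)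
  also have "(\<Sum>U\<in>Pow A. f U) = (\<Sum>V\<in>Pow A. 1 / (1 + real (card V))) + 1"
  proof -
    have "(\<Sum>U\<in>Pow A. 1 / (1 + real (card (A - U)))) = (\<Sum>V\<in>Pow A. 1 / (1 + real (card V)))"
      by (rule sum.reindex_bij_witness[of _ "\<lambda>U. A - U" "\<lambda>U. A - U"]) auto
    then show ?thesis unfolding f_def using finA by (simp add: sum.distrib)
  qed
  also have "\<dots> = (2 ^ (card A + 1) - 1) / (real (card A) + 1) + 1"
    using finA by (simp add: sum_Pow_inverse_Suc_card)
  finally have sum_eq: "(\<Sum>T\<in>Pow M. 1 / (1 + real (card (A - T))) + (if A \<subseteq> T then 1 else 0))
        = 2 ^ card (M - A) * ((2 ^ (card A + 1) - 1) / (real (card A) + 1) + 1)" .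
  have "card M = card (M - A) + card A"
    using assms finA card_mono[OF assms] by (simp add: card_Diff_subset)
  then have "2 ^ (card M + 1) / (real (card A) + 1) = 2 ^ card (M - A) * (2 ^ (card A + 1) / (real (card A) + 1))"
    by (simp add: power_add)
  also have "\<dots> \<le> 2 ^ card (M - A) * ((2 ^ (card A + 1) - 1) / (real (card A) + 1) + 1)"
    by (intro mult_left_mono) (simp_all add: field_simps)
  finally show ?thesis unfolding sum_eq .
qed

lemma svg_winning_superset: "svg N W \<Longrightarrow> S \<in> W \<Longrightarrow> S \<subseteq> T \<Longrightarrow> T \<subseteq> N \<Longrightarrow> T \<in> W"
  unfolding svg_def by blast

declare alpha.simps[simp del]

lemma alpha_unfold:
  assumes "finite N" "S \<subseteq> N"
  shows "alpha N W k S =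
      (if decisive W k S then 1
      else if \<not> successful W k S then 0
      else (\<Sum>C\<in>loyal_children N W S. alpha N W k C) / real (card (loyal_children N W S)))"
  using assms by (subst alpha.simps) simp

lemma alpha_decisive: "finite N \<Longrightarrow> S \<subseteq> N \<Longrightarrow> decisive W k S \<Longrightarrow> alpha N W k S = 1"
  by (simp add: alpha_unfold)

lemma alpha_losing_member:
  "finite N \<Longrightarrow> S \<subseteq> N \<Longrightarrow> k \<in> S \<Longrightarrow> S \<notin> W \<Longrightarrow> alpha N W k S = 0"
  by (simp add: alpha_unfold decisive_def yes_decisive_def no_decisive_def successful_def)

lemma loyal_children_winning:
  "S \<in> W \<Longrightarrow> loyal_children N W S = (\<lambda>m. S - {m}) ` {m \<in> S. S - {m} \<in> W}"
  unfolding loyal_children_def by auto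

lemma loyal_children_losing:
  "S \<notin> W \<Longrightarrow> loyal_children N W S = (\<lambda>m. insert m S) ` {m \<in> N - S. insert m S \<notin> W}"
  unfolding loyal_children_def by auto

lemma alpha_losing_average:
  assumes "finite N" "T \<subseteq> N" "T \<notin> W" "k \<in> N - T"
    and losing: "\<And>m. m \<in> N - T \<Longrightarrow> insert m T \<notin> W"
  shows "alpha N W k T = (\<Sum>m\<in>N - T. alpha N W k (insert m T)) / real (card (N - T))"
proof -
  have children: "loyal_children N W T = (\<lambda>m. insert m T) ` (N - T)"
    using assms(3) losing by (auto simp: loyal_children_losing)
  have inj: "inj_on (\<lambda>m. insert m T) (N - T)" unfolding inj_on_def by blast
  have "\<not> decisive W k T" "successful W k T"
    using assms(3,4) losing[OF assms(4)]
    unfolding decisive_def yes_decisive_def no_decisive_def successful_def by auto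
  then show ?thesis
    using assms(1,2) by (simp add: alpha_unfold children sum.reindex[OF inj] card_image[OF inj])
qed

lemma alpha_yes_blocker_winning:
  assumes "finite N" "T \<subseteq> N" "T \<in> W" "yes_blocker W b"
  shows "alpha N W b T = 1"
proof -
  have "b \<in> T" "T - {b} \<notin> W" using assms(3,4) unfolding yes_blocker_def by auto
  then show ?thesis
    using assms(1-3) by (simp add: alpha_decisive decisive_def yes_decisive_def)
qed

lemma alpha_yes_blocker_children_sum_ge:
  assumes G: "svg N W" and yb: "yes_blocker W b" and S: "S \<in> W" "b \<in> S"
    and T: "T \<subseteq> N" "b \<notin> T" "insert b T \<notin> W"
    and children: "\<And>m. m \<in> N - insert b T \<Longrightarrow>
                     1 / real (card (S - insert m T)) \<le> alpha N W b (insert m T)"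
  shows "real (card (N - T)) / real (card (S - T)) \<le> (\<Sum>m\<in>N - T. alpha N W b (insert m T))"
proof -
  have finN: "finite N" and SN: "S \<subseteq> N" using G S unfolding svg_def by auto
  define P where "P = S - insert b T"
  define Q where "Q = N - T - S"
  have split: "N - T = insert b (P \<union> Q)" "b \<notin> P \<union> Q" "P \<inter> Q = {}"
    using S SN T unfolding P_def Q_def by auto
  have fin: "finite P" "finite Q" using finN SN unfolding P_def Q_def by (auto intro: finite_subset)
  have "S - T = insert b P" using S T unfolding P_def by auto
  then have cST: "card (S - T) = card P + 1" using split fin by simp
  have "P \<noteq> {}"
  proof
    assume "P = {}"
    then have "insert b T \<in> W"
      using S SN T unfolding P_def by (intro svg_winning_superset[OF G S(1)]) auto
    with T(3) show False by simp
  qed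
  have "(\<Sum>m\<in>P. 1 / real (card P)) \<le> (\<Sum>m\<in>P. alpha N W b (insert m T))"
  proof (rule sum_mono)
    fix m assume m: "m \<in> P"
    have "S - insert m T = (S - T) - {m}" by auto
    then have "card (S - insert m T) = card P"
      using m cST finN SN unfolding P_def by (simp add: card_Diff_singleton finite_subset)
    then show "1 / real (card P) \<le> alpha N W b (insert m T)"
      using children[of m] m split by auto
  qed
  then have sumP: "1 \<le> (\<Sum>m\<in>P. alpha N W b (insert m T))"
    using \<open>P \<noteq> {}\<close> fin by simp
  have "(\<Sum>m\<in>Q. 1 / real (card P + 1)) \<le> (\<Sum>m\<in>Q. alpha N W b (insert m T))"
  proof (rule sum_mono)
    fix m assume m: "m \<in> Q"
    then have "S - insert m T = S - T" unfolding Q_def by auto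
    then show "1 / real (card P + 1) \<le> alpha N W b (insert m T)"
      using children[of m] m split cST by auto
  qed
  then have sumQ: "real (card Q) / real (card P + 1) \<le> (\<Sum>m\<in>Q. alpha N W b (insert m T))"
    by simp
  have "alpha N W b (insert b T) = 0"
    using T finN SN S by (intro alpha_losing_member) auto
  then have "1 + real (card Q) / real (card P + 1) \<le> (\<Sum>m\<in>N - T. alpha N W b (insert m T))"
    using sumP sumQ split fin by (simp add: sum.union_disjoint)
  moreover have "real (card (N - T)) / real (card (S - T)) = 1 + real (card Q) / real (card P + 1)"
    using split fin cST by (simp add: card_Un_disjoint field_simps)
  ultimately show ?thesis by simp
qed

lemma alpha_yes_blocker_nonmember_ge:
  assumes G: "svg N W" and yb: "yes_blocker W b" and S: "S \<in> W" "b \<in> S"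
  shows "T \<subseteq> N \<Longrightarrow> b \<notin> T \<Longrightarrow> 1 / real (card (S - T)) \<le> alpha N W b T"
proof (induction "card (N - T)" arbitrary: T rule: less_induct)
  case less
  have finN: "finite N" and bN: "b \<in> N" using G S unfolding svg_def by auto
  have TW: "T \<notin> W" using yb less.prems(2) unfolding yes_blocker_def by blast
  show ?case
  proof (cases "insert b T \<in> W")
    case True
    then have "decisive W b T" using less.prems TW by (simp add: decisive_def no_decisive_def)
    then have "alpha N W b T = 1" using finN less.prems by (simp add: alpha_decisive)
    moreover have "1 / real (card (S - T)) \<le> 1"
      by (cases "card (S - T) = 0") (auto simp: divide_le_eq_1)
    ultimately show ?thesis by simp
  next
    case False
    have losing: "insert m T \<notin> W" if "m \<in> N - T" for m
      using False yb that less.prems(2) unfolding yes_blocker_def by auto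
    have "1 / real (card (S - insert m T)) \<le> alpha N W b (insert m T)" if "m \<in> N - insert b T" for m
    proof (rule less.hyps)
      show "card (N - insert m T) < card (N - T)"
        using that finN by (intro psubset_card_mono) auto
    qed (use that less.prems in auto)
    then have sum_ge: "real (card (N - T)) / real (card (S - T)) \<le> (\<Sum>m\<in>N - T. alpha N W b (insert m T))"
      using less.prems False by (intro alpha_yes_blocker_children_sum_ge[OF G yb S]) auto
    have "card (N - T) > 0" using finN bN less.prems by (auto simp: card_gt_0_iff)
    then have "1 / real (card (S - T)) \<le> (\<Sum>m\<in>N - T. alpha N W b (insert m T)) / real (card (N - T))"
      using divide_right_mono[OF sum_ge, of "real (card (N - T))"] by simp
    also have "\<dots> = alpha N W b T"
      using finN bN less.prems TW losing by (intro alpha_losing_average[symmetric]) auto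
    finally show ?thesis .
  qed
qed

lemma RM_yes_blocker_ge:
  assumes G: "svg N W" and yb: "yes_blocker W b" and S: "S \<in> W" "b \<in> S"
  shows "1 / real (card S) \<le> RM N W b"
proof -
  have finN: "finite N" and SN: "S \<subseteq> N" using G S unfolding svg_def by auto
  define M where "M = N - {b}"
  define A where "A = S - {b}"
  have N: "N = insert b M" "b \<notin> M" using S SN unfolding M_def by auto
  have AM: "A \<subseteq> M" using SN unfolding A_def M_def by auto
  have finM: "finite M" using finN unfolding M_def by simp
  have pair: "1 / (1 + real (card (A - T))) + (if A \<subseteq> T then 1 else 0)
              \<le> alpha N W b T + alpha N W b (insert b T)" if "T \<in> Pow M" for T
  proof -
    have T: "T \<subseteq> N" "b \<notin> T" "insert b T \<subseteq> N" using that N by auto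
    have "S - T = insert b (A - T)" "b \<notin> A - T" using S(2) T(2) unfolding A_def by auto
    then have "card (S - T) = 1 + card (A - T)"
      using finN SN by (simp add: A_def finite_subset)
    then have "1 / (1 + real (card (A - T))) \<le> alpha N W b T"
      using alpha_yes_blocker_nonmember_ge[OF G yb S T(1,2)] by simp
    moreover have "(if A \<subseteq> T then 1 else 0) \<le> alpha N W b (insert b T)"
    proof (cases "insert b T \<in> W")
      case True
      then show ?thesis using finN T(3) yb by (simp add: alpha_yes_blocker_winning)
    next
      case False
      then have "\<not> A \<subseteq> T"
        using svg_winning_superset[OF G S(1), of "insert b T"] T(3) unfolding A_def by blast
      then show ?thesis using finN T(3) False by (simp add: alpha_losing_member)
    qed
    ultimately show ?thesis by simp
  qed
  have "card S = card A + 1"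
    using card.remove[OF finite_subset[OF SN finN] S(2)] unfolding A_def by simp
  then have "2 ^ card N / real (card S) = 2 ^ (card M + 1) / (real (card A) + 1)"
    using N finM by simp
  also have "\<dots> \<le> (\<Sum>T\<in>Pow M. 1 / (1 + real (card (A - T))) + (if A \<subseteq> T then 1 else 0))"
    using finM AM by (rule sum_Pow_inverse_Suc_card_Diff_ge)
  also have "\<dots> \<le> (\<Sum>T\<in>Pow M. alpha N W b T + alpha N W b (insert b T))"
    using pair by (rule sum_mono)
  also have "\<dots> = (\<Sum>X\<in>Pow N. alpha N W b X)"
    using N finM by (simp add: sum_Pow_insert)
  finally show ?thesis
    unfolding RM_def by (simp add: divide_right_mono[where c = "2 ^ card N", simplified] le_divide_eq)
qed

definition dual_game :: "'a set \<Rightarrow> 'a set set \<Rightarrow> 'a set set" where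
  "dual_game N W = {X. X \<subseteq> N \<and> N - X \<notin> W}"

lemma compl_in_dual_game_iff: "X \<subseteq> N \<Longrightarrow> N - X \<in> dual_game N W \<longleftrightarrow> X \<notin> W"
  by (auto simp: dual_game_def double_diff)

lemma svg_dual_game:
  assumes "svg N W"
  shows "svg N (dual_game N W)"
proof -
  have "T \<in> dual_game N W" if "S \<in> dual_game N W" "S \<subseteq> T" "T \<subseteq> N" for S T
  proof -
    have "N - S \<notin> W" "N - T \<subseteq> N - S" "N - S \<subseteq> N" using that unfolding dual_game_def by auto
    then have "N - T \<notin> W" using svg_winning_superset[OF assms, of "N - T" "N - S"] by blast
    then show ?thesis using that(3) unfolding dual_game_def by simp
  qed
  then show ?thesis using assms unfolding svg_def dual_game_def by auto
qed

lemma yes_blocker_dual_game: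
  assumes "b \<in> N" "no_blocker N W b"
  shows "yes_blocker (dual_game N W) b"
  using assms unfolding yes_blocker_def no_blocker_def dual_game_def by auto

lemma decisive_dual_game_iff:
  assumes "S \<subseteq> N" "k \<in> N"
  shows "decisive (dual_game N W) k (N - S) \<longleftrightarrow> decisive W k S"
proof -
  have "N - S - {k} = N - insert k S" "insert k (N - S) = N - (S - {k})" using assms by auto
  then show ?thesis
    using assms compl_in_dual_game_iff[of S N W] compl_in_dual_game_iff[of "insert k S" N W]
      compl_in_dual_game_iff[of "S - {k}" N W]
    unfolding decisive_def yes_decisive_def no_decisive_def by auto
qed

lemma successful_dual_game_iff:
  assumes "S \<subseteq> N" "k \<in> N"
  shows "successful (dual_game N W) k (N - S) \<longleftrightarrow> successful W k S"
  using assms compl_in_dual_game_iff[of S N W] unfolding successful_def by auto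

lemma loyal_children_dual_game:
  assumes "S \<subseteq> N"
  shows "loyal_children N (dual_game N W) (N - S) = (\<lambda>C. N - C) ` loyal_children N W S"
proof (cases "S \<in> W")
  case True
  have compl: "insert m (N - S) = N - (S - {m})" if "m \<in> S" for m
    using that assms by auto
  have "N - (S - {m}) \<in> dual_game N W \<longleftrightarrow> S - {m} \<notin> W" for m
    using assms by (intro compl_in_dual_game_iff) auto
  then have members: "{m \<in> N - (N - S). insert m (N - S) \<notin> dual_game N W} = {m \<in> S. S - {m} \<in> W}"
    using assms compl by auto
  have "loyal_children N (dual_game N W) (N - S) =
        (\<lambda>m. insert m (N - S)) ` {m \<in> N - (N - S). insert m (N - S) \<notin> dual_game N W}"
    using True assms by (intro loyal_children_losing) (simp add: compl_in_dual_game_iff)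
  also have "\<dots> = (\<lambda>m. N - (S - {m})) ` {m \<in> S. S - {m} \<in> W}"
    unfolding members using compl by (intro image_cong) auto
  also have "\<dots> = (\<lambda>C. N - C) ` loyal_children N W S"
    using True by (simp add: loyal_children_winning image_image)
  finally show ?thesis .
next
  case False
  have "{m \<in> N - S. N - S - {m} \<in> dual_game N W} = {m \<in> N - S. insert m S \<notin> W}"
    using assms compl_in_dual_game_iff[of "insert _ S" N W] by (auto simp: Diff_insert[symmetric])
  then show ?thesis
    using False assms compl_in_dual_game_iff[of S N W]
    by (simp add: loyal_children_winning loyal_children_losing image_image Diff_insert[symmetric])
qed

lemma alpha_dual_game:
  "finite N \<Longrightarrow> k \<in> N \<Longrightarrow> S \<subseteq> N \<Longrightarrow> alpha N (dual_game N W) k (N - S) = alpha N W k S"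
proof (induction N W k S rule: alpha.induct)
  case (1 N W k S)
  note fin = "1.prems"(1) and k = "1.prems"(2) and S = "1.prems"(3)
  let ?D = "dual_game N W" and ?C = "loyal_children N W S"
  have NS: "N - S \<subseteq> N" by blast
  have dec: "decisive ?D k (N - S) \<longleftrightarrow> decisive W k S"
    and succ: "successful ?D k (N - S) \<longleftrightarrow> successful W k S"
    using S k by (simp_all add: decisive_dual_game_iff successful_dual_game_iff)
  consider "decisive W k S" | "\<not> successful W k S" | (avg) "\<not> decisive W k S" "successful W k S"
    by blast
  then show ?case
  proof cases
    case avg
    have children: "C \<subseteq> N" if "C \<in> ?C" for C
      using loyal_children_measure[OF fin S that] by blast
    then have inj: "inj_on (\<lambda>C. N - C) ?C" unfolding inj_on_def by blast
    have IH: "alpha N ?D k (N - C) = alpha N W k C" if "C \<in> ?C" for C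
      using "1.IH"[OF _ avg(1) _ that] avg(2) fin k children[OF that] S by blast
    have "alpha N ?D k (N - S) = (\<Sum>C\<in>(\<lambda>C. N - C) ` ?C. alpha N ?D k C) / real (card ((\<lambda>C. N - C) ` ?C))"
      using fin S avg dec succ by (simp add: alpha_unfold loyal_children_dual_game)
    also have "\<dots> = (\<Sum>C\<in>?C. alpha N W k C) / real (card ?C)"
      using IH by (simp add: sum.reindex[OF inj] card_image[OF inj])
    also have "\<dots> = alpha N W k S"
      using fin S avg by (simp add: alpha_unfold)
    finally show ?thesis .
  qed (use fin S NS dec succ in \<open>simp_all add: alpha_unfold\<close>)
qed

lemma RM_dual_game:
  assumes "finite N" "k \<in> N"
  shows "RM N (dual_game N W) k = RM N W k"
proof -
  have "bij_betw (\<lambda>S. N - S) (Pow N) (Pow N)"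
    by (rule bij_betw_byWitness[of _ "\<lambda>S. N - S"]) auto
  then have "(\<Sum>X\<in>Pow N. alpha N (dual_game N W) k X) = (\<Sum>S\<in>Pow N. alpha N (dual_game N W) k (N - S))"
    by (simp add: sum.reindex_bij_betw)
  also have "\<dots> = (\<Sum>S\<in>Pow N. alpha N W k S)"
    using assms by (intro sum.cong) (simp_all add: alpha_dual_game)
  finally show ?thesis unfolding RM_def by simp
qed

theorem theorem6:
  fixes N :: "'a set" and W :: "'a set set"
  assumes "svg N W"
  shows "(\<forall>S b. S \<in> W \<and> b \<in> S \<and> yes_blocker W b \<longrightarrow> RM N W b \<ge> 1 / real (card S)) \<and>
         (\<forall>T b. T \<subseteq> N \<and> T \<notin> W \<and> b \<in> N - T \<and> no_blocker N W b
                 \<longrightarrow> RM N W b \<ge> 1 / real (card (N - T)))"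
proof (intro conjI allI impI)
  fix S b
  assume "S \<in> W \<and> b \<in> S \<and> yes_blocker W b"
  then show "RM N W b \<ge> 1 / real (card S)"
    using RM_yes_blocker_ge[OF assms] by blast
next
  fix T b
  assume T: "T \<subseteq> N \<and> T \<notin> W \<and> b \<in> N - T \<and> no_blocker N W b"
  then have "N - T \<in> dual_game N W" "yes_blocker (dual_game N W) b"
    by (simp_all add: compl_in_dual_game_iff yes_blocker_dual_game)
  then have "1 / real (card (N - T)) \<le> RM N (dual_game N W) b"
    using RM_yes_blocker_ge[OF svg_dual_game[OF assms]] T by blast
  moreover have "finite N" using assms unfolding svg_def by blast
  ultimately show "RM N W b \<ge> 1 / real (card (N - T))"
    using T by (simp add: RM_dual_game)
qed

end
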